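(* Let $(\Lambda,Y)$ be an extensible graph with parameters $(t,s,\bar s)$ with $t=1$, let $y\in Y$, $Y_1=\Lambda(y,1)$, $Y_2=\Lambda(y,2)$, and $\Lambda_1,\Lambda_2$ the graphs induced on $Y_1,Y_2$. Write the edges of $\Lambda_1$ (which partition $Y_1$) as $\{a'_i,a''_i\}$, $1\le i\le s$, and let $A'_i,A''_i$ be the sets of points of $Y_2$ adjacent to $a'_i$, $a''_i$ respectively. Let $D_i$ be the set of edges of $\Lambda_2$ contained in $A'_i$ or in $A''_i$ (it is a partition of $Y_2$), and let $t_i$ be the permutation of $Y_2$ with $t_i(u)=v$ iff $\{u,v\}\in D_i$. Then: (a) The group $T$ of permutations of $Y_2$ generated by $t_1,\dots,t_s$ is an elementary abelian $2$-group acting regularly on $Y_2$. (b) The rank $r$ of $T$ satisfies $r\ge s-1$, and if $r=s-1$ then $t_s=t_1\circ\cdots\circ t_{s-1}$. (c) $(t,s,\bar s)\in\{(1,1,0),(1,2,2),(1,3,4),(1,5,8)\}$.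
   Context: A finite simple graph $(\Lambda,Y)$ is extensible with parameters $(t,s,\bar s)$ (nonnegative integers) if: (1) $\Lambda$ has diameter $2$; (2) for every $y\in Y$, with $\Lambda(y,d)$ the set of vertices at distance $d$ from $y$: (a) $|\Lambda(y,1)|=2s$; (b) $|\Lambda(y,2)|=2\bar s$; (c) every $z\in\Lambda(y,1)$ is adjacent to exactly $\bar s$ points of $\Lambda(y,2)$ and exactly $t=2s-\bar s-1$ points of $\Lambda(y,1)$; (d) every $z\in\Lambda(y,2)$ is adjacent to exactly $s$ points of $\Lambda(y,2)$ and exactly $s$ points of $\Lambda(y,1)$; (3) every edge lies in exactly $t$ triangles; (4) $|Y|=1+2s+2\bar s$. The rank of an elementary abelian $2$-group is its dimension as an $\mathbb{F}_2$-vector space. *)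

theory Defs
  imports "HOL-Algebra.Algebra"
begin

definition simple_graph :: "'a set \<Rightarrow> ('a \<Rightarrow> 'a \<Rightarrow> bool) \<Rightarrow> bool" where
  "simple_graph Y E \<longleftrightarrow> finite Y \<and> (\<forall>x z. E x z \<longrightarrow> x \<in> Y \<and> z \<in> Y)
     \<and> (\<forall>x. \<not> E x x) \<and> (\<forall>x z. E x z \<longrightarrow> E z x)"

definition nbhd1 :: "'a set \<Rightarrow> ('a \<Rightarrow> 'a \<Rightarrow> bool) \<Rightarrow> 'a \<Rightarrow> 'a set" where
  "nbhd1 Y E y = {z \<in> Y. E y z}"

definition nbhd2 :: "'a set \<Rightarrow> ('a \<Rightarrow> 'a \<Rightarrow> bool) \<Rightarrow> 'a \<Rightarrow> 'a set" where
  "nbhd2 Y E y = {z \<in> Y. z \<noteq> y \<and> \<not> E y z \<and> (\<exists>w \<in> Y. E y w \<and> E w z)}"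

definition diam_le2 :: "'a set \<Rightarrow> ('a \<Rightarrow> 'a \<Rightarrow> bool) \<Rightarrow> bool" where
  "diam_le2 Y E \<longleftrightarrow> (\<forall>x \<in> Y. \<forall>z \<in> Y. x = z \<or> E x z \<or> (\<exists>w \<in> Y. E x w \<and> E w z))"

definition extensible :: "'a set \<Rightarrow> ('a \<Rightarrow> 'a \<Rightarrow> bool) \<Rightarrow> nat \<Rightarrow> nat \<Rightarrow> nat \<Rightarrow> bool" where
  "extensible Y E t s sb \<longleftrightarrow>
     simple_graph Y E \<and>
     int t = 2 * int s - int sb - 1 \<and>
     diam_le2 Y E \<and>
     (\<forall>y \<in> Y.
        card (nbhd1 Y E y) = 2 * s \<and>
        card (nbhd2 Y E y) = 2 * sb \<and>
        (\<forall>z \<in> nbhd1 Y E y. card {w \<in> nbhd2 Y E y. E z w} = sb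
                         \<and> card {w \<in> nbhd1 Y E y. E z w} = t) \<and>
        (\<forall>z \<in> nbhd2 Y E y. card {w \<in> nbhd2 Y E y. E z w} = s
                         \<and> card {w \<in> nbhd1 Y E y. E z w} = s)) \<and>
     (\<forall>x z. E x z \<longrightarrow> card {w \<in> Y. E x w \<and> E z w} = t) \<and>
     card Y = 1 + 2 * s + 2 * sb"

definition induced_edges :: "'a set \<Rightarrow> ('a \<Rightarrow> 'a \<Rightarrow> bool) \<Rightarrow> 'a set set" where
  "induced_edges S E = {{u, v} | u v. u \<in> S \<and> v \<in> S \<and> E u v}"

definition adjY2 :: "'a set \<Rightarrow> ('a \<Rightarrow> 'a \<Rightarrow> bool) \<Rightarrow> 'a \<Rightarrow> 'a \<Rightarrow> 'a set" where
  "adjY2 Y E y a = {u \<in> nbhd2 Y E y. E a u}"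

definition Dset :: "'a set \<Rightarrow> ('a \<Rightarrow> 'a \<Rightarrow> bool) \<Rightarrow> 'a \<Rightarrow> 'a \<Rightarrow> 'a \<Rightarrow> 'a set set" where
  "Dset Y E y a1 a2 = {e \<in> induced_edges (nbhd2 Y E y) E.
       e \<subseteq> adjY2 Y E y a1 \<or> e \<subseteq> adjY2 Y E y a2}"

text \<open>t_i: the permutation of Y_2 with t_i(u) = v iff {u,v} in D_i
  (as an element of BijGroup Y_2, i.e. extensional outside Y_2).\<close>
definition tperm :: "'a set \<Rightarrow> ('a \<Rightarrow> 'a \<Rightarrow> bool) \<Rightarrow> 'a \<Rightarrow> 'a \<Rightarrow> 'a \<Rightarrow> 'a \<Rightarrow> 'a" where
  "tperm Y E y a1 a2 = (\<lambda>u \<in> nbhd2 Y E y. THE v. {u, v} \<in> Dset Y E y a1 a2)"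

text \<open>Rank of an elementary abelian 2-group (dimension over F_2) = the
  minimal size of a generating (= F_2-spanning) set.\<close>
definition group_rank :: "('a, 'b) monoid_scheme \<Rightarrow> nat" where
  "group_rank G = (LEAST n. \<exists>S. S \<subseteq> carrier G \<and> finite S \<and> card S = n
                                 \<and> generate G S = carrier G)"

end

theory Submission
  imports Defs
begin

text \<open>
  Since t = 1, every edge lies in exactly one triangle. Hence the edges of Lambda_1 form a
  perfect matching {a'_i, a''_i}, and every u in Y_2 is adjacent to exactly one end, its
  contact c_i(u), of each of them: the triangle on a'_i a''_i is the one through y, and u has
  s neighbours in Y_1. The point t_i(u) is the third vertex of the triangle on u and c_i(u);
  uniqueness of triangles shows that t_i keeps the side of u at the i-th pair and switches it at
  all the others.

  Counting the s common neighbours of u and t_i t_j u (the s - 2 contacts c_m(u), m not in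
  {i, j}, and two points of Y_2) shows t_i t_j = t_j t_i, so T is elementary abelian. The same
  count shows that a point outside the T-orbit of u would lie on the same side as every orbit
  point, which u and t_1 u contradict. An abelian transitive group is regular, so
  |T| = |Y_2| = 4(s - 1). The product of the t_i over R switches the side at m iff membership
  of m in R differs from the parity of |R|; hence the products over subsets of {1..s-1} are
  distinct (over all subsets of {1..s} if s is even). This gives 2^(s-1) <= |T| <= 2^r, which
  together with |T| = 4(s - 1) leaves s in {1, 2, 3, 5}; and if r = s - 1 these products exhaust
  T, and comparing sides identifies t_s with the product of t_1, ..., t_(s-1).
\<close>

section \<open>Groups generated by commuting involutions\<close>

lemma (in group) commutant_subgroup:
  assumes "A \<subseteq> carrier G"
  shows "subgroup {g \<in> carrier G. \<forall>a \<in> A. g \<otimes> a = a \<otimes> g} G"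
proof (rule subgroupI)
  fix g assume "g \<in> {g \<in> carrier G. \<forall>a \<in> A. g \<otimes> a = a \<otimes> g}"
  then show "inv g \<in> {g \<in> carrier G. \<forall>a \<in> A. g \<otimes> a = a \<otimes> g}"
    using assms by (auto simp: inv_solve_left inv_solve_right m_assoc)
next
  fix g h assume "g \<in> {g \<in> carrier G. \<forall>a \<in> A. g \<otimes> a = a \<otimes> g}"
    and "h \<in> {g \<in> carrier G. \<forall>a \<in> A. g \<otimes> a = a \<otimes> g}"
  then show "g \<otimes> h \<in> {g \<in> carrier G. \<forall>a \<in> A. g \<otimes> a = a \<otimes> g}"
    using assms by (auto simp: subset_iff) (metis m_assoc)
next
  show "{g \<in> carrier G. \<forall>a \<in> A. g \<otimes> a = a \<otimes> g} \<noteq> {}"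
    using assms by (auto intro!: exI[of _ \<one>])
qed auto

lemma (in group) generate_commute:
  assumes S: "S \<subseteq> carrier G" and comm: "\<And>a b. a \<in> S \<Longrightarrow> b \<in> S \<Longrightarrow> a \<otimes> b = b \<otimes> a"
    and g: "g \<in> generate G S" and h: "h \<in> generate G S"
  shows "g \<otimes> h = h \<otimes> g"
proof -
  have "generate G S \<subseteq> {g \<in> carrier G. \<forall>a \<in> S. g \<otimes> a = a \<otimes> g}"
    using S comm by (intro generate_subgroup_incl commutant_subgroup) auto
  then have "generate G S \<subseteq> {g \<in> carrier G. \<forall>a \<in> generate G S. g \<otimes> a = a \<otimes> g}"
    using S generate_in_carrier[OF S]
    by (intro generate_subgroup_incl[OF _ commutant_subgroup]) auto
  then show ?thesis using g h by blast
qed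

lemma (in group) generate_square_one:
  assumes S: "S \<subseteq> carrier G" and comm: "\<And>a b. a \<in> S \<Longrightarrow> b \<in> S \<Longrightarrow> a \<otimes> b = b \<otimes> a"
    and sq: "\<And>a. a \<in> S \<Longrightarrow> a \<otimes> a = \<one>" and g: "g \<in> generate G S"
  shows "g \<otimes> g = \<one>"
  using g
proof (induction rule: generate.induct)
  case (inv h)
  then have "h \<in> carrier G" using S by blast
  then have "inv h \<otimes> inv h = inv (h \<otimes> h)" by (simp add: inv_mult_group)
  then show ?case using inv sq by simp
next
  case (eng h1 h2)
  have c: "h1 \<in> carrier G" "h2 \<in> carrier G"
    using generate_in_carrier[OF S] eng by auto
  have "(h1 \<otimes> h2) \<otimes> (h1 \<otimes> h2) = h1 \<otimes> (h2 \<otimes> h1) \<otimes> h2" using c by (simp add: m_assoc)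
  also have "\<dots> = h1 \<otimes> (h1 \<otimes> h2) \<otimes> h2" by (simp only: generate_commute[OF S comm eng(2,1)])
  also have "\<dots> = (h1 \<otimes> h1) \<otimes> (h2 \<otimes> h2)" using c by (simp add: m_assoc)
  finally show ?case using eng by simp
qed (simp_all add: sq)

lemma (in group) comm_group_generate:
  assumes S: "S \<subseteq> carrier G" and comm: "\<And>a b. a \<in> S \<Longrightarrow> b \<in> S \<Longrightarrow> a \<otimes> b = b \<otimes> a"
  shows "comm_group (G\<lparr>carrier := generate G S\<rparr>)"
proof (rule group.group_comm_groupI)
  show "group (G\<lparr>carrier := generate G S\<rparr>)"
    using S by (intro subgroup.subgroup_is_group generate_is_subgroup is_group)
  fix g h assume "g \<in> carrier (G\<lparr>carrier := generate G S\<rparr>)" "h \<in> carrier (G\<lparr>carrier := generate G S\<rparr>)"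
  then show "g \<otimes>\<^bsub>G\<lparr>carrier := generate G S\<rparr>\<^esub> h = h \<otimes>\<^bsub>G\<lparr>carrier := generate G S\<rparr>\<^esub> g"
    using generate_commute[OF S comm] by simp
qed

lemma (in comm_group) generate_insert_subset:
  assumes x: "x \<in> carrier G" and xx: "x \<otimes> x = \<one>" and F: "F \<subseteq> carrier G"
  shows "generate G (insert x F) \<subseteq> generate G F \<union> (\<otimes>) x ` generate G F"
proof (rule generate_subgroup_incl)
  let ?A = "generate G F"
  let ?H = "?A \<union> (\<otimes>) x ` ?A"
  have A: "subgroup ?A G" using F by (rule generate_is_subgroup)
  have Ac: "a \<in> carrier G" if "a \<in> ?A" for a by (rule subgroup.mem_carrier[OF A that])
  have "x = x \<otimes> \<one>" using x by simp
  then show "insert x F \<subseteq> ?H" using generate.one[of G F] generate.incl[of _ F G] by blast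
  show "subgroup ?H G"
  proof (rule subgroupI)
    show "?H \<subseteq> carrier G" using x Ac by auto
    show "?H \<noteq> {}" using generate.one by blast
  next
    fix g assume "g \<in> ?H"
    then consider "g \<in> ?A" | a where "a \<in> ?A" "g = x \<otimes> a" by blast
    then show "inv g \<in> ?H"
    proof cases
      case (2 a)
      have "inv x = x" using x xx by (simp add: inv_equality)
      then have "inv g = x \<otimes> inv a" using 2 x Ac by (simp add: inv_mult)
      then show ?thesis using 2 subgroup.m_inv_closed[OF A] by blast
    qed (use subgroup.m_inv_closed[OF A] in blast)
  next
    fix g h assume "g \<in> ?H" "h \<in> ?H"
    have closed: "a \<otimes> b \<in> ?A" if "a \<in> ?A" "b \<in> ?A" for a b
      by (rule subgroup.m_closed[OF A that])
    have xxc: "x \<otimes> (x \<otimes> c) = c" if "c \<in> carrier G" for c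
      using that x xx m_assoc[of x x c, symmetric] by simp
    have "a \<otimes> (x \<otimes> b) = x \<otimes> (a \<otimes> b)" "x \<otimes> a \<otimes> b = x \<otimes> (a \<otimes> b)"
      "x \<otimes> a \<otimes> (x \<otimes> b) = a \<otimes> b" if "a \<in> ?A" "b \<in> ?A" for a b
      using that Ac x m_lcomm[of a x b] m_assoc[of x a b] m_assoc[of x a "x \<otimes> b"] xxc[of "a \<otimes> b"]
      by auto
    then show "g \<otimes> h \<in> ?H" using \<open>g \<in> ?H\<close> \<open>h \<in> ?H\<close> closed by auto
  qed
qed

lemma (in comm_group) card_generate_le_exp2:
  assumes sq: "\<And>x. x \<in> carrier G \<Longrightarrow> x \<otimes> x = \<one>" and "finite S" and "S \<subseteq> carrier G"
  shows "finite (generate G S) \<and> card (generate G S) \<le> 2 ^ card S"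
  using \<open>finite S\<close> \<open>S \<subseteq> carrier G\<close>
proof (induction S rule: finite_induct)
  case empty
  then show ?case by (simp add: generate_empty)
next
  case (insert x F)
  let ?A = "generate G F"
  have sub: "generate G (insert x F) \<subseteq> ?A \<union> (\<otimes>) x ` ?A"
    using insert by (intro generate_insert_subset sq) auto
  have fA: "finite ?A" and cA: "card ?A \<le> 2 ^ card F" using insert by auto
  have fU: "finite (?A \<union> (\<otimes>) x ` ?A)" using fA by simp
  have "card (generate G (insert x F)) \<le> card (?A \<union> (\<otimes>) x ` ?A)"
    by (rule card_mono[OF fU sub])
  also have "\<dots> \<le> card ?A + card ?A"
    using card_Un_le[of ?A "(\<otimes>) x ` ?A"] card_image_le[OF fA, of "(\<otimes>) x"] by linarith
  also have "\<dots> \<le> 2 ^ card (insert x F)" using cA insert(1,2) by simp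
  finally show ?case using finite_subset[OF sub fU] by simp
qed

lemma (in comm_group) card_le_exp2_group_rank:
  assumes "finite (carrier G)" and sq: "\<And>x. x \<in> carrier G \<Longrightarrow> x \<otimes> x = \<one>"
  shows "card (carrier G) \<le> 2 ^ group_rank G"
proof -
  have "generate G (carrier G) = carrier G"
    by (rule equalityI[OF generate_incl]) (auto intro: generate.incl)
  then have "\<exists>n S. S \<subseteq> carrier G \<and> finite S \<and> card S = n \<and> generate G S = carrier G"
    using assms(1) by blast
  then have "\<exists>S. S \<subseteq> carrier G \<and> finite S \<and> card S = group_rank G \<and> generate G S = carrier G"
    unfolding group_rank_def by (rule LeastI_ex)
  then obtain S where S: "S \<subseteq> carrier G" "finite S" "card S = group_rank G"
    and gen: "generate G S = carrier G"
    by blast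
  show ?thesis using card_generate_le_exp2[OF sq S(2,1)] unfolding gen S(3) by (rule conjunct2)
qed

lemma transitive_commuting_eqI:
  assumes "H \<subseteq> extensional A"
    and comm: "\<And>f g v. f \<in> H \<Longrightarrow> g \<in> H \<Longrightarrow> v \<in> A \<Longrightarrow> f (g v) = g (f v)"
    and trans: "\<And>v. v \<in> A \<Longrightarrow> \<exists>f\<in>H. f u = v"
    and g: "g \<in> H" and h: "h \<in> H" and u: "u \<in> A" and gh: "g u = h u"
  shows "g = h"
proof (rule extensionalityI)
  show "g \<in> extensional A" "h \<in> extensional A" using assms(1) g h by auto
  fix v assume "v \<in> A"
  then obtain f where f: "f \<in> H" "f u = v" using trans by blast
  have "g v = f (g u)" using comm[OF g f(1) u] f(2) by simp
  also have "\<dots> = h v" using comm[OF h f(1) u] f(2) gh by simp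
  finally show "g v = h v" .
qed

lemma four_mul_lt_exp2: "5 \<le> n \<Longrightarrow> 4 * n < (2::nat) ^ n"
proof (induction n rule: nat_induct_at_least)
  case (Suc n)
  then show ?case by simp
qed simp

lemma exp2_le_four_mul_cases:
  assumes "2 \<le> s" and "(2::nat) ^ (s - 1) \<le> 4 * (s - 1)" and "even s \<Longrightarrow> (2::nat) ^ s \<le> 4 * (s - 1)"
  shows "s = 2 \<or> s = 3 \<or> s = 5"
proof -
  have "s - 1 < 5" using four_mul_lt_exp2[of "s - 1"] assms(2) by linarith
  moreover have "s \<noteq> 4" using assms(3) by auto
  ultimately show ?thesis using assms(1) by presburger
qed

lemma parity_switch_eq_cases:
  assumes R: "R \<subseteq> I" and R': "R' \<subseteq> I"
    and eq: "\<And>m. m \<in> I \<Longrightarrow> (m \<in> R \<longleftrightarrow> odd (card R)) \<longleftrightarrow> (m \<in> R' \<longleftrightarrow> odd (card R'))"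
  shows "R = R' \<or> R' = I - R \<and> odd (card R) \<noteq> odd (card R')"
proof (cases "odd (card R) = odd (card R')")
  case True
  then have "R = R'" using eq R R' by blast
  then show ?thesis by simp
next
  case False
  then have "R' = I - R" using eq R R' by blast
  then show ?thesis using False by simp
qed

lemma card_Collect_eq_1_ex1:
  assumes "card {x \<in> A. P x} = 1" shows "\<exists>!x. x \<in> A \<and> P x"
proof -
  obtain x where "{x \<in> A. P x} = {x}" using assms by (rule card_1_singletonE)
  then show ?thesis by (intro ex1I[of _ x]) blast+
qed

section \<open>Extensible graphs with t = 1\<close>

locale extensible_t1 =
  fixes Y :: "'a set" and E :: "'a \<Rightarrow> 'a \<Rightarrow> bool" and t s sb :: nat
    and y :: 'a and a1 a2 :: "nat \<Rightarrow> 'a"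
  assumes extensible: "extensible Y E t s sb"
    and t_eq_1: "t = 1"
    and y_in_Y: "y \<in> Y"
    and Y1_matching: "induced_edges (nbhd1 Y E y) E = {{a1 i, a2 i} | i. i \<in> {1..s}}"
    and Y1_matching_inj: "inj_on (\<lambda>i. {a1 i, a2 i}) {1..s}"
begin

abbreviation "Y1 \<equiv> nbhd1 Y E y"
abbreviation "Y2 \<equiv> nbhd2 Y E y"

lemma finite_Y: "finite Y"
  and edge_irrefl: "\<not> E x x"
  and edge_sym: "E x z \<Longrightarrow> E z x"
  using extensible by (simp_all add: extensible_def simple_graph_def)

lemma edge_commute: "E x z \<longleftrightarrow> E z x"
  using edge_sym by blast

lemma sb_eq: "sb = 2 * s - 2" and s_ge_1: "1 \<le> s"
  using extensible t_eq_1 by (auto simp: extensible_def)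

lemma card_Y2: "card Y2 = 2 * sb"
  using extensible y_in_Y by (simp add: extensible_def)

lemma ex1_triangle: "E x z \<Longrightarrow> \<exists>!w. w \<in> Y \<and> E x w \<and> E z w"
  using extensible t_eq_1 by (intro card_Collect_eq_1_ex1) (simp add: extensible_def)

lemma ex1_Y1_neighbour: "z \<in> Y1 \<Longrightarrow> \<exists>!w. w \<in> Y1 \<and> E z w"
  using extensible t_eq_1 y_in_Y by (intro card_Collect_eq_1_ex1) (simp add: extensible_def)

lemma card_Y2_neighbours_Y2: "u \<in> Y2 \<Longrightarrow> card {w \<in> Y2. E u w} = s"
  and card_Y2_neighbours_Y1: "u \<in> Y2 \<Longrightarrow> card {w \<in> Y1. E u w} = s"
  using extensible y_in_Y by (simp_all add: extensible_def)

lemma card_common_neighbours_nbhd2: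
  "x \<in> Y \<Longrightarrow> w \<in> nbhd2 Y E x \<Longrightarrow> card {z \<in> nbhd1 Y E x. E w z} = s"
  using extensible by (simp add: extensible_def)

lemma y_notin_Y2: "y \<notin> Y2"
  and Y1_notin_Y2: "u \<in> Y1 \<Longrightarrow> u \<notin> Y2"
  and Y1D: "u \<in> Y1 \<Longrightarrow> u \<in> Y \<and> E y u"
  and Y2D: "u \<in> Y2 \<Longrightarrow> u \<in> Y \<and> \<not> E y u \<and> u \<noteq> y"
  by (auto simp: nbhd1_def nbhd2_def)

lemma diam: "diam_le2 Y E"
  using extensible by (simp add: extensible_def)

lemma Y_cases: "w \<in> Y \<Longrightarrow> w = y \<or> w \<in> Y1 \<or> w \<in> Y2"
  using diam y_in_Y unfolding diam_le2_def nbhd1_def nbhd2_def by auto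

lemma neighbour_Y2_cases: "u \<in> Y2 \<Longrightarrow> z \<in> Y \<Longrightarrow> E u z \<Longrightarrow> z \<in> Y1 \<or> z \<in> Y2"
  using Y_cases[of z] Y2D[of u] edge_sym[of u z] by auto

lemma pair_props:
  assumes "i \<in> {1..s}"
  shows "a1 i \<in> Y1" "a2 i \<in> Y1" "E (a1 i) (a2 i)" "a1 i \<noteq> a2 i"
proof -
  have "{a1 i, a2 i} \<in> induced_edges Y1 E" using Y1_matching assms by blast
  then obtain u v where uv: "{a1 i, a2 i} = {u, v}" "u \<in> Y1" "v \<in> Y1" "E u v"
    unfolding induced_edges_def by blast
  then have "u \<noteq> v" using edge_irrefl by auto
  then show "a1 i \<in> Y1" "a2 i \<in> Y1" "E (a1 i) (a2 i)" "a1 i \<noteq> a2 i"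
    using uv edge_sym by (auto simp: doubleton_eq_iff)
qed

lemma Y1_in_pair: "z \<in> Y1 \<Longrightarrow> \<exists>i\<in>{1..s}. z = a1 i \<or> z = a2 i"
proof -
  assume z: "z \<in> Y1"
  then obtain w where "w \<in> Y1" "E z w" using ex1_Y1_neighbour by blast
  then have "{z, w} \<in> induced_edges Y1 E" using z unfolding induced_edges_def by blast
  then obtain i where "i \<in> {1..s}" "{z, w} = {a1 i, a2 i}" using Y1_matching by auto
  then show ?thesis by (auto simp: doubleton_eq_iff)
qed

lemma Y1_partner:
  assumes "i \<in> {1..s}" and "w \<in> Y1"
  shows "E (a1 i) w \<longleftrightarrow> w = a2 i" and "E (a2 i) w \<longleftrightarrow> w = a1 i"
  using ex1_Y1_neighbour[of "a1 i"] ex1_Y1_neighbour[of "a2 i"] pair_props[OF assms(1)] assms(2)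
    edge_sym[of "a1 i" "a2 i"] by blast+

lemma pairs_disjoint:
  assumes i: "i \<in> {1..s}" and j: "j \<in> {1..s}" and ij: "i \<noteq> j"
  shows "a1 i \<noteq> a1 j" "a1 i \<noteq> a2 j" "a2 i \<noteq> a1 j" "a2 i \<noteq> a2 j"
proof -
  have ne: "{a1 i, a2 i} \<noteq> {a1 j, a2 j}" using Y1_matching_inj i j ij unfolding inj_on_def by blast
  have j12: "E (a1 j) (a2 j)" "E (a2 j) (a1 j)" "a1 j \<in> Y1" "a2 j \<in> Y1"
    using pair_props[OF j] edge_sym by auto
  show "a1 i \<noteq> a1 j"
  proof
    assume e: "a1 i = a1 j"
    then have "a2 j = a2 i" using Y1_partner(1)[OF i j12(4)] j12 by simp
    then show False using ne e by simp
  qed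
  show "a1 i \<noteq> a2 j"
  proof
    assume e: "a1 i = a2 j"
    then have "a1 j = a2 i" using Y1_partner(1)[OF i j12(3)] j12 by simp
    then show False using ne e by auto
  qed
  show "a2 i \<noteq> a1 j"
  proof
    assume e: "a2 i = a1 j"
    then have "a2 j = a1 i" using Y1_partner(2)[OF i j12(4)] j12 by simp
    then show False using ne e by auto
  qed
  show "a2 i \<noteq> a2 j"
  proof
    assume e: "a2 i = a2 j"
    then have "a1 j = a1 i" using Y1_partner(2)[OF i j12(3)] j12 by simp
    then show False using ne e by simp
  qed
qed

text \<open>The only triangle on the edge a1 i -- a2 i is the one through y.\<close>

lemma Y2_not_adj_both:
  assumes u: "u \<in> Y2" and i: "i \<in> {1..s}"
  shows "\<not> (E (a1 i) u \<and> E (a2 i) u)"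
proof
  assume "E (a1 i) u \<and> E (a2 i) u"
  moreover have "E (a1 i) y" "E (a2 i) y"
    using pair_props[OF i] Y1D edge_sym[of y "a1 i"] edge_sym[of y "a2 i"] by auto
  ultimately have "y = u"
    using ex1_triangle[OF pair_props(3)[OF i]] y_in_Y Y2D[OF u] by blast
  then show False using u y_notin_Y2 by simp
qed

text \<open>u has s neighbours in Y1, at most one in each pair.\<close>

lemma Y2_adj_one:
  assumes u: "u \<in> Y2" and i: "i \<in> {1..s}"
  shows "E (a1 i) u \<or> E (a2 i) u"
proof -
  define I where "I = {i \<in> {1..s}. E (a1 i) u \<or> E (a2 i) u}"
  define f where "f i = (if E (a1 i) u then a1 i else a2 i)" for i
  have "{w \<in> Y1. E u w} \<subseteq> f ` I"
  proof
    fix w assume w: "w \<in> {w \<in> Y1. E u w}"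
    then obtain j where j: "j \<in> {1..s}" "w = a1 j \<or> w = a2 j" using Y1_in_pair by blast
    have "E w u" using w edge_sym[of u w] by simp
    then have "j \<in> I" "f j = w" using j Y2_not_adj_both[OF u j(1)] unfolding I_def f_def by auto
    then show "w \<in> f ` I" by blast
  qed
  then have "card {w \<in> Y1. E u w} \<le> card (f ` I)" by (rule card_mono[rotated]) (simp add: I_def)
  then have "s \<le> card (f ` I)" using card_Y2_neighbours_Y1[OF u] by simp
  also have "\<dots> \<le> card I" by (rule card_image_le) (simp add: I_def)
  finally have "I = {1..s}" by (intro card_seteq) (auto simp: I_def)
  then have "i \<in> I" using i by simp
  then show ?thesis by (simp add: I_def)
qed

definition contact :: "'a \<Rightarrow> nat \<Rightarrow> 'a" where
  "contact u i = (if E (a1 i) u then a1 i else a2 i)"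

lemma contact_props:
  assumes u: "u \<in> Y2" and i: "i \<in> {1..s}"
  shows "contact u i \<in> Y1" "E (contact u i) u" "E u (contact u i)"
  using pair_props[OF i] Y2_adj_one[OF u i] edge_sym unfolding contact_def by auto

lemma contact_inj:
  "u \<in> Y2 \<Longrightarrow> i \<in> {1..s} \<Longrightarrow> j \<in> {1..s} \<Longrightarrow> i \<noteq> j \<Longrightarrow> contact u i \<noteq> contact u j"
  using pairs_disjoint unfolding contact_def by auto

lemma inj_on_contact: "u \<in> Y2 \<Longrightarrow> inj_on (contact u) {1..s}"
  using contact_inj unfolding inj_on_def by blast

lemma Y1_neighbour_eq_contact:
  assumes u: "u \<in> Y2" and w: "w \<in> Y1" "E u w"
  shows "\<exists>m\<in>{1..s}. w = contact u m"
proof -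
  obtain m where m: "m \<in> {1..s}" "w = a1 m \<or> w = a2 m" using Y1_in_pair w(1) by blast
  have "E w u" using w(2) edge_sym by simp
  then have "w = contact u m" using m Y2_not_adj_both[OF u m(1)] unfolding contact_def by auto
  then show ?thesis using m(1) by blast
qed

lemma contact_adj_iff:
  assumes "u \<in> Y2" and "v \<in> Y2" and "i \<in> {1..s}"
  shows "E (contact u i) v \<longleftrightarrow> (E (a1 i) v \<longleftrightarrow> E (a1 i) u)"
  using Y2_adj_one[OF assms(1,3)] Y2_not_adj_both[OF assms(1,3)]
    Y2_adj_one[OF assms(2,3)] Y2_not_adj_both[OF assms(2,3)]
  unfolding contact_def by auto

lemma contact_eq_iff:
  assumes "u \<in> Y2" and "v \<in> Y2" and "i \<in> {1..s}"
  shows "contact u i = contact v i \<longleftrightarrow> (E (a1 i) v \<longleftrightarrow> E (a1 i) u)"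
  using pair_props(4)[OF assms(3)] unfolding contact_def by auto

lemma triangle_on_contact_in_Y2:
  assumes u: "u \<in> Y2" and i: "i \<in> {1..s}" and w: "w \<in> Y" "E (contact u i) w" "E u w"
  shows "w \<in> Y2"
proof -
  have "w \<noteq> y" using w(3) Y2D[OF u] edge_sym[of u w] by auto
  moreover have "w \<notin> Y1"
  proof
    assume "w \<in> Y1"
    then have "w = a2 i \<and> E (a1 i) u \<or> w = a1 i \<and> E (a2 i) u"
      using w(2) Y1_partner[OF i] Y2_adj_one[OF u i] unfolding contact_def by (auto split: if_splits)
    then show False using w(3) edge_sym[of u w] Y2_not_adj_both[OF u i] by auto
  qed
  ultimately show ?thesis using Y_cases[OF w(1)] by auto
qed

lemma Dset_iff:
  assumes u: "u \<in> Y2" and i: "i \<in> {1..s}"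
  shows "{u, v} \<in> Dset Y E y (a1 i) (a2 i) \<longleftrightarrow> v \<in> Y2 \<and> E u v \<and> E (contact u i) v"
proof
  assume "{u, v} \<in> Dset Y E y (a1 i) (a2 i)"
  then obtain p q where pq: "{u, v} = {p, q}" "p \<in> Y2" "q \<in> Y2" "E p q"
    and sub: "{u, v} \<subseteq> adjY2 Y E y (a1 i) \<or> {u, v} \<subseteq> adjY2 Y E y (a2 i)"
    unfolding Dset_def induced_edges_def by blast
  have "v \<in> Y2 \<and> E u v" using pq edge_sym[of p q] by (auto simp: doubleton_eq_iff)
  moreover have "E (contact u i) v"
    using sub Y2_not_adj_both[OF u i] unfolding adjY2_def contact_def by auto
  ultimately show "v \<in> Y2 \<and> E u v \<and> E (contact u i) v" by blast
next
  assume v: "v \<in> Y2 \<and> E u v \<and> E (contact u i) v"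
  then have "{u, v} \<in> induced_edges Y2 E" using u unfolding induced_edges_def by blast
  moreover have "{u, v} \<subseteq> adjY2 Y E y (a1 i) \<or> {u, v} \<subseteq> adjY2 Y E y (a2 i)"
    using v u contact_props(2)[OF u i] unfolding adjY2_def contact_def by (auto split: if_splits)
  ultimately show "{u, v} \<in> Dset Y E y (a1 i) (a2 i)" unfolding Dset_def by blast
qed

abbreviation "tau i \<equiv> tperm Y E y (a1 i) (a2 i)"

lemma tau_props:
  assumes u: "u \<in> Y2" and i: "i \<in> {1..s}"
  shows "tau i u \<in> Y2" "E u (tau i u)" "E (contact u i) (tau i u)"
    and tau_unique: "w \<in> Y \<Longrightarrow> E (contact u i) w \<Longrightarrow> E u w \<Longrightarrow> w = tau i u"
proof -
  obtain v where v: "v \<in> Y" "E (contact u i) v" "E u v"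
    and uniq: "\<And>w. w \<in> Y \<Longrightarrow> E (contact u i) w \<Longrightarrow> E u w \<Longrightarrow> w = v"
    using ex1_triangle[OF contact_props(2)[OF u i]] by blast
  have vY2: "v \<in> Y2" using triangle_on_contact_in_Y2[OF u i v] .
  have "tau i u = (THE v. {u, v} \<in> Dset Y E y (a1 i) (a2 i))"
    using u unfolding tperm_def by simp
  also have "\<dots> = v"
  proof (rule the_equality)
    show "{u, v} \<in> Dset Y E y (a1 i) (a2 i)" using Dset_iff[OF u i] vY2 v by simp
    fix w assume "{u, w} \<in> Dset Y E y (a1 i) (a2 i)"
    then have "w \<in> Y2" "E u w" "E (contact u i) w" using Dset_iff[OF u i] by auto
    then show "w = v" using uniq Y2D by simp
  qed
  finally have tau_eq: "tau i u = v" .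
  show "tau i u \<in> Y2" "E u (tau i u)" "E (contact u i) (tau i u)"
    unfolding tau_eq using vY2 v by simp_all
  show "w \<in> Y \<Longrightarrow> E (contact u i) w \<Longrightarrow> E u w \<Longrightarrow> w = tau i u"
    unfolding tau_eq by (rule uniq)
qed

lemma common_neighbour_tau:
  assumes u: "u \<in> Y2" and i: "i \<in> {1..s}" and w: "w \<in> Y" "E u w" "E (tau i u) w"
  shows "w = contact u i"
proof -
  have "contact u i \<in> Y" using contact_props(1)[OF u i] Y1D by blast
  moreover have "E (tau i u) (contact u i)" using tau_props(3)[OF u i] edge_sym by simp
  ultimately show ?thesis
    using ex1_triangle[OF tau_props(2)[OF u i]] w contact_props(3)[OF u i] by blast
qed

lemma side_tau:
  assumes u: "u \<in> Y2" and i: "i \<in> {1..s}" and m: "m \<in> {1..s}"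
  shows "E (a1 m) (tau i u) \<longleftrightarrow> (if m = i then E (a1 m) u else \<not> E (a1 m) u)"
proof (cases "m = i")
  case True
  then show ?thesis
    using contact_adj_iff[OF u tau_props(1)[OF u i] i] tau_props(3)[OF u i] by auto
next
  case False
  have "\<not> E (contact u m) (tau i u)"
  proof
    assume "E (contact u m) (tau i u)"
    then have "contact u m = contact u i"
      using common_neighbour_tau[OF u i] contact_props[OF u m] Y1D edge_sym by blast
    then show False using contact_inj[OF u m i False] by simp
  qed
  then show ?thesis using contact_adj_iff[OF u tau_props(1)[OF u i] m] False by auto
qed

lemma tau_tau:
  assumes u: "u \<in> Y2" and i: "i \<in> {1..s}"
  shows "tau i (tau i u) = u"
proof -
  let ?v = "tau i u"
  have v: "?v \<in> Y2" using tau_props(1)[OF u i] .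
  have "contact ?v i = contact u i" using contact_eq_iff[OF v u i] side_tau[OF u i i] by simp
  then have "E (contact ?v i) u" using contact_props(2)[OF u i] by simp
  moreover have "E ?v u" using tau_props(2)[OF u i] edge_sym by simp
  ultimately show ?thesis using tau_unique[OF v i, of u] Y2D[OF u] by simp
qed

lemma Y2_neighbour_eq_tau:
  assumes u: "u \<in> Y2" and w: "w \<in> Y2" "E u w"
  shows "\<exists>k\<in>{1..s}. w = tau k u"
proof -
  have "(\<lambda>k. tau k u) ` {1..s} \<subseteq> {w \<in> Y2. E u w}" using tau_props[OF u] by auto
  moreover have "inj_on (\<lambda>k. tau k u) {1..s}"
    using side_tau[OF u] by (intro inj_onI) (metis (full_types))
  then have "card ((\<lambda>k. tau k u) ` {1..s}) = s" by (simp add: card_image)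
  moreover have "finite {w \<in> Y2. E u w}" using finite_Y by (simp add: nbhd2_def)
  ultimately have "(\<lambda>k. tau k u) ` {1..s} = {w \<in> Y2. E u w}"
    using card_Y2_neighbours_Y2[OF u] by (intro card_subset_eq) auto
  then show ?thesis using w by blast
qed

lemma side_tau_tau:
  assumes u: "u \<in> Y2" and i: "i \<in> {1..s}" and j: "j \<in> {1..s}" and m: "m \<in> {1..s}"
    and ij: "i \<noteq> j"
  shows "E (a1 m) (tau i (tau j u)) \<longleftrightarrow> (if m = i \<or> m = j then \<not> E (a1 m) u else E (a1 m) u)"
  using side_tau[OF tau_props(1)[OF u j] i m] side_tau[OF u j m] ij by auto

lemma card_common_neighbours_Y2:
  assumes u: "u \<in> Y2" and w: "w \<in> Y2" and uw: "u \<noteq> w" "\<not> E u w"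
    and x: "x \<in> Y" "E u x" "E x w"
  shows "card {z \<in> Y2. E u z \<and> E w z} + card {m \<in> {1..s}. E (a1 m) w \<longleftrightarrow> E (a1 m) u} = s"
proof -
  let ?A = "{m \<in> {1..s}. E (a1 m) w \<longleftrightarrow> E (a1 m) u}"
  let ?C2 = "{z \<in> Y2. E u z \<and> E w z}"
  have uY: "u \<in> Y" "w \<in> Y" using Y2D u w by auto
  have "w \<in> nbhd2 Y E u" unfolding nbhd2_def using uY uw x by blast
  then have C: "card {z \<in> nbhd1 Y E u. E w z} = s" by (rule card_common_neighbours_nbhd2[OF uY(1)])
  have contact_A: "contact u m \<in> {z \<in> nbhd1 Y E u. E w z} \<longleftrightarrow> m \<in> ?A" if m: "m \<in> {1..s}" for m
    using contact_props[OF u m] contact_adj_iff[OF u w m] Y1D[OF contact_props(1)[OF u m]] m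
    unfolding nbhd1_def by (auto simp: edge_commute[of w])
  have "{z \<in> nbhd1 Y E u. E w z} = contact u ` ?A \<union> ?C2"
  proof (intro equalityI subsetI)
    fix z assume zC: "z \<in> {z \<in> nbhd1 Y E u. E w z}"
    then have z: "z \<in> Y" "E u z" "E w z" by (auto simp: nbhd1_def)
    from neighbour_Y2_cases[OF u z(1,2)] show "z \<in> contact u ` ?A \<union> ?C2"
    proof
      assume "z \<in> Y1"
      then obtain m where m: "m \<in> {1..s}" "z = contact u m"
        using Y1_neighbour_eq_contact[OF u _ z(2)] by blast
      then show ?thesis using contact_A[OF m(1)] zC by blast
    qed (use z in simp)
  next
    fix z assume "z \<in> contact u ` ?A \<union> ?C2"
    then show "z \<in> {z \<in> nbhd1 Y E u. E w z}"
      using contact_A by (auto simp: nbhd1_def nbhd2_def)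
  qed
  moreover have "card (contact u ` ?A) = card ?A"
    by (rule card_image[OF inj_on_subset[OF inj_on_contact[OF u]]]) blast
  moreover have "contact u ` ?A \<inter> ?C2 = {}" using contact_props(1)[OF u] Y1_notin_Y2 by auto
  moreover have "finite ?C2" using finite_Y by (simp add: nbhd2_def)
  ultimately show ?thesis using C by (simp add: card_Un_disjoint)
qed

lemma tau_commute:
  assumes u: "u \<in> Y2" and i: "i \<in> {1..s}" and j: "j \<in> {1..s}" and ij: "i \<noteq> j"
  shows "tau i (tau j u) = tau j (tau i u)"
proof -
  define v where "v = tau j u"
  define w where "w = tau i v"
  have v: "v \<in> Y2" "E u v" using tau_props[OF u j] v_def by auto
  have w: "w \<in> Y2" "E v w" using tau_props[OF v(1) i] w_def by auto
  have side_w: "E (a1 m) w \<longleftrightarrow> (if m = i \<or> m = j then \<not> E (a1 m) u else E (a1 m) u)"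
    if "m \<in> {1..s}" for m
    using side_tau_tau[OF u i j that ij] unfolding w_def v_def .
  have wu: "u \<noteq> w" using side_w[OF i] by auto
  have nuw: "\<not> E u w"
  proof
    assume "E u w"
    then have "w = contact u j"
      using common_neighbour_tau[OF u j] w Y2D unfolding v_def by blast
    then show False using w(1) contact_props(1)[OF u j] Y1_notin_Y2 by simp
  qed
  have "{m \<in> {1..s}. E (a1 m) w \<longleftrightarrow> E (a1 m) u} = {1..s} - {i, j}"
    using side_w by auto
  moreover have "card ({1..s} - {i, j}) = s - 2" using i j ij by (subst card_Diff_subset) auto
  moreover have "2 \<le> s" using i j ij by auto
  ultimately have "card {z \<in> Y2. E u z \<and> E w z} = 2"
    using card_common_neighbours_Y2[OF u w(1) wu nuw _ v(2) w(2)] Y2D[OF v(1)] by simp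
  then obtain x1 x2 where x12: "{z \<in> Y2. E u z \<and> E w z} = {x1, x2}" "x1 \<noteq> x2"
    by (auto simp: card_2_iff)
  moreover have "v \<in> {z \<in> Y2. E u z \<and> E w z}" using v w(2) edge_commute by auto
  ultimately obtain x where "x \<in> {z \<in> Y2. E u z \<and> E w z}" "x \<noteq> v" by blast
  then have x: "x \<in> Y2" "E u x" "E w x" "x \<noteq> v" by auto
  obtain k where k: "k \<in> {1..s}" "x = tau k u" using Y2_neighbour_eq_tau[OF u x(1,2)] by blast
  have kj: "k \<noteq> j" using x(4) k(2) v_def by auto
  obtain m where m: "m \<in> {1..s}" "w = tau m x"
    using Y2_neighbour_eq_tau[OF x(1) w(1)] x(3) edge_commute by blast
  have mk: "m \<noteq> k" using wu m k tau_tau[OF u k(1)] by auto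
  have flips: "(n = m \<or> n = k) \<longleftrightarrow> (n = i \<or> n = j)" if n: "n \<in> {1..s}" for n
    using side_tau_tau[OF u m(1) k(1) n mk] side_w[OF n] m(2) k(2)
    by (cases "n = m \<or> n = k"; cases "n = i \<or> n = j") auto
  have "k = i" using flips[OF k(1)] kj by simp
  moreover have "m = j" using flips[OF m(1)] mk \<open>k = i\<close> by simp
  ultimately show ?thesis using m(2) k(2) unfolding w_def v_def by simp
qed

lemma side_eq_if_no_common_Y2_neighbour:
  assumes u: "u \<in> Y2" and w: "w \<in> Y2" and uw: "u \<noteq> w" "\<not> E u w"
    and no_common: "\<And>z. z \<in> Y2 \<Longrightarrow> E u z \<Longrightarrow> E w z \<Longrightarrow> False" and m: "m \<in> {1..s}"
  shows "E (a1 m) w \<longleftrightarrow> E (a1 m) u"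
proof -
  obtain x where x: "x \<in> Y" "E u x" "E x w"
    using diam Y2D[OF u] Y2D[OF w] uw unfolding diam_le2_def by blast
  have "{z \<in> Y2. E u z \<and> E w z} = {}" using no_common by blast
  then have "card {m \<in> {1..s}. E (a1 m) w \<longleftrightarrow> E (a1 m) u} = card {1..s}"
    using card_common_neighbours_Y2[OF u w uw x] by (simp only: card.empty) simp
  then have "{m \<in> {1..s}. E (a1 m) w \<longleftrightarrow> E (a1 m) u} = {1..s}"
    by (intro card_subset_eq) auto
  then show ?thesis using m by blast
qed

subsection \<open>The group generated by the t_i\<close>

abbreviation "G \<equiv> BijGroup Y2"
abbreviation "T \<equiv> generate G (tau ` {1..s})"
abbreviation "TG \<equiv> G\<lparr>carrier := T\<rparr>"

lemma finite_Y2: "finite Y2"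
  using finite_Y by (simp add: nbhd2_def)

lemma card_Y2_eq: "card Y2 = 4 * (s - 1)"
  using card_Y2 sb_eq by simp

lemma Y2_empty_iff: "Y2 = {} \<longleftrightarrow> s = 1"
  using card_Y2_eq finite_Y2 s_ge_1 by (cases "Y2 = {}") auto

lemma tau_Bij: "i \<in> {1..s} \<Longrightarrow> tau i \<in> Bij Y2"
  unfolding Bij_def tperm_def
  using tau_tau tau_props(1) by (auto intro!: bij_betw_byWitness[where f' = "tau i"] simp: tperm_def)

lemma mult_G_apply: "f \<in> Bij Y2 \<Longrightarrow> g \<in> Bij Y2 \<Longrightarrow> u \<in> Y2 \<Longrightarrow> (f \<otimes>\<^bsub>G\<^esub> g) u = f (g u)"
  by (simp add: BijGroup_def compose_def)

lemma tau_mult_commute: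
  assumes "i \<in> {1..s}" and "j \<in> {1..s}"
  shows "tau i \<otimes>\<^bsub>G\<^esub> tau j = tau j \<otimes>\<^bsub>G\<^esub> tau i"
  using assms tau_Bij tau_commute by (cases "i = j") (auto simp: BijGroup_def compose_def)

lemma tau_mult_self: "i \<in> {1..s} \<Longrightarrow> tau i \<otimes>\<^bsub>G\<^esub> tau i = \<one>\<^bsub>G\<^esub>"
  using tau_Bij tau_tau by (auto simp: BijGroup_def compose_def)

lemma tau_in_carrier: "tau ` {1..s} \<subseteq> carrier G"
  using tau_Bij by (auto simp: BijGroup_def)

lemma T_subset_Bij: "T \<subseteq> Bij Y2"
  using group.generate_incl[OF group_BijGroup tau_in_carrier] by (simp add: BijGroup_def)

lemma taus_commute: "a \<in> tau ` {1..s} \<Longrightarrow> b \<in> tau ` {1..s} \<Longrightarrow> a \<otimes>\<^bsub>G\<^esub> b = b \<otimes>\<^bsub>G\<^esub> a"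
  using tau_mult_commute by (elim imageE) simp

lemma comm_group_TG: "comm_group TG"
  by (rule group.comm_group_generate[OF group_BijGroup tau_in_carrier taus_commute])

lemma T_square_one: "g \<in> T \<Longrightarrow> g \<otimes>\<^bsub>G\<^esub> g = \<one>\<^bsub>G\<^esub>"
proof (rule group.generate_square_one[OF group_BijGroup tau_in_carrier taus_commute])
  show "a \<otimes>\<^bsub>G\<^esub> a = \<one>\<^bsub>G\<^esub>" if "a \<in> tau ` {1..s}" for a
    using that tau_mult_self by blast
qed

lemma mult_T_apply: "g \<in> T \<Longrightarrow> h \<in> T \<Longrightarrow> u \<in> Y2 \<Longrightarrow> (g \<otimes>\<^bsub>G\<^esub> h) u = g (h u)"
  using mult_G_apply T_subset_Bij by blast

lemma T_maps_Y2: "g \<in> T \<Longrightarrow> u \<in> Y2 \<Longrightarrow> g u \<in> Y2"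
  using T_subset_Bij by (meson Bij_imp_funcset funcset_mem subsetD)

lemma finite_T: "finite T"
proof (rule finite_subset)
  have "Bij Y2 \<subseteq> Pi\<^sub>E Y2 (\<lambda>_. Y2)"
    unfolding PiE_def using Bij_imp_extensional Bij_imp_funcset by blast
  then show "T \<subseteq> Pi\<^sub>E Y2 (\<lambda>_. Y2)" using T_subset_Bij by blast
  show "finite (Pi\<^sub>E Y2 (\<lambda>_. Y2))" using finite_Y2 by (simp add: finite_PiE)
qed

lemma tau_mult_in_T: "k \<in> {1..s} \<Longrightarrow> g \<in> T \<Longrightarrow> tau k \<otimes>\<^bsub>G\<^esub> g \<in> T"
  by (rule generate.eng) (auto intro: generate.incl)

lemma T_transitive:
  assumes u: "u \<in> Y2" and w: "w \<in> Y2"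
  shows "\<exists>g\<in>T. g u = w"
proof (rule ccontr)
  assume not_reached: "\<not> (\<exists>g\<in>T. g u = w)"
  let ?O = "(\<lambda>g. g u) ` T"
  have O_Y2: "v \<in> Y2" if "v \<in> ?O" for v using that u T_maps_Y2 by blast
  have O_tau: "tau k v \<in> ?O" if "v \<in> ?O" "k \<in> {1..s}" for v k
  proof -
    obtain g where "g \<in> T" "v = g u" using \<open>v \<in> ?O\<close> by blast
    then have "tau k v = (tau k \<otimes>\<^bsub>G\<^esub> g) u"
      using mult_T_apply[of "tau k" g u] u that(2) by (simp add: generate.incl)
    then show ?thesis using tau_mult_in_T[OF that(2) \<open>g \<in> T\<close>] by blast
  qed
  have Y2_neighbour_O: "z \<in> ?O" if "v \<in> ?O" "z \<in> Y2" "E v z" for v z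
    using Y2_neighbour_eq_tau[OF O_Y2[OF that(1)] that(2,3)] O_tau[OF that(1)] by blast
  have w_notin: "w \<notin> ?O" using not_reached by blast
  have side_eq: "E (a1 m) w \<longleftrightarrow> E (a1 m) v" if "v \<in> ?O" "m \<in> {1..s}" for v m
  proof (rule side_eq_if_no_common_Y2_neighbour[OF O_Y2[OF that(1)] w _ _ _ that(2)])
    show "v \<noteq> w" "\<not> E v w" using that(1) w_notin Y2_neighbour_O[OF that(1) w] by auto
    show False if "z \<in> Y2" "E v z" "E w z" for z
      using Y2_neighbour_O[OF Y2_neighbour_O[OF \<open>v \<in> ?O\<close> that(1,2)] w] that(3)
        edge_commute[of w z] w_notin by simp
  qed
  have "\<one>\<^bsub>G\<^esub> u = u" using u by (simp add: BijGroup_def)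
  then have uO: "u \<in> ?O" using generate.one[of G "tau ` {1..s}"] by (rule image_eqI[OF sym])
  have "s \<noteq> 1" using u Y2_empty_iff by auto
  then have one_two: "1 \<in> {1..s}" "2 \<in> {1..s}" using s_ge_1 by auto
  have "E (a1 2) (tau 1 u) \<longleftrightarrow> E (a1 2) u"
    using side_eq[OF O_tau[OF uO one_two(1)] one_two(2)] side_eq[OF uO one_two(2)] by simp
  then show False using side_tau[OF u one_two] by simp
qed

lemma T_regular:
  assumes u: "u \<in> Y2" and v: "v \<in> Y2"
  shows "\<exists>!g. g \<in> T \<and> g u = v"
proof -
  have "g = h" if "g \<in> T" "h \<in> T" "g u = h u" for g h
  proof (rule transitive_commuting_eqI[OF _ _ T_transitive[OF u] that(1,2) u that(3)])
    show "T \<subseteq> extensional Y2" using T_subset_Bij by (auto dest: Bij_imp_extensional)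
    show "f (g v) = g (f v)" if "f \<in> T" "g \<in> T" "v \<in> Y2" for f g v
      using mult_T_apply[OF that] mult_T_apply[OF that(2,1,3)]
        group.generate_commute[OF group_BijGroup tau_in_carrier taus_commute that(1,2)] by simp
  qed
  then show ?thesis using T_transitive[OF u v] by blast
qed

lemma card_T: "u \<in> Y2 \<Longrightarrow> card T = card Y2"
proof (rule bij_betw_same_card[of "\<lambda>g. g u"])
  assume u: "u \<in> Y2"
  show "bij_betw (\<lambda>g. g u) T Y2"
    unfolding bij_betw_def inj_on_def using T_regular[OF u] T_maps_Y2[OF _ u] by blast
qed

lemma tau_funcset_carrier_TG: "R \<subseteq> {1..s} \<Longrightarrow> tau \<in> R \<rightarrow> carrier TG"
  by (auto intro: generate.incl)

lemma finprod_tau_in_T: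
  assumes "R \<subseteq> {1..s}" shows "finprod TG tau R \<in> T"
proof -
  interpret TG: comm_group TG by (rule comm_group_TG)
  show ?thesis using TG.finprod_closed[OF tau_funcset_carrier_TG[OF assms]] by simp
qed

lemma finprod_tau_apply_insert:
  assumes "finite R" "R \<subseteq> {1..s}" "k \<in> {1..s}" "k \<notin> R" "u \<in> Y2"
  shows "finprod TG tau (insert k R) u = tau k (finprod TG tau R u)"
proof -
  interpret TG: comm_group TG by (rule comm_group_TG)
  have "finprod TG tau (insert k R) = tau k \<otimes>\<^bsub>G\<^esub> finprod TG tau R"
    using assms TG.finprod_insert[OF assms(1,4) tau_funcset_carrier_TG[OF assms(2)]] tau_funcset_carrier_TG[of "{k}"] by simp
  then show ?thesis
    using mult_T_apply[of "tau k" "finprod TG tau R" u] finprod_tau_in_T assms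
    by (simp add: generate.incl)
qed

lemma side_finprod_tau:
  assumes u: "u \<in> Y2" and m: "m \<in> {1..s}" and R: "R \<subseteq> {1..s}"
  shows "E (a1 m) (finprod TG tau R u) \<longleftrightarrow> (E (a1 m) u \<longleftrightarrow> (m \<in> R \<longleftrightarrow> odd (card R)))"
proof -
  have "finite R" using R finite_subset by blast
  then show ?thesis using R
  proof (induction R rule: finite_induct)
    case empty
    interpret TG: comm_group TG by (rule comm_group_TG)
    have "finprod TG tau {} = \<one>\<^bsub>G\<^esub>" using TG.finprod_empty by simp
    then show ?case using u by (simp add: BijGroup_def)
  next
    case (insert k R)
    have k: "k \<in> {1..s}" and R: "R \<subseteq> {1..s}" using insert.prems by auto
    have "finprod TG tau R u \<in> Y2" using T_maps_Y2[OF finprod_tau_in_T[OF R] u] .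
    then show ?case
      using finprod_tau_apply_insert[OF insert.hyps(1) R k insert.hyps(2) u] insert.IH[OF R]
        insert.hyps(1,2) side_tau[OF _ k m] by (cases "m = k") auto
  qed
qed

lemma finprod_tau_eq_cases:
  assumes "Y2 \<noteq> {}" and R: "R \<subseteq> {1..s}" and R': "R' \<subseteq> {1..s}"
    and eq: "finprod TG tau R = finprod TG tau R'"
  shows "R = R' \<or> R' = {1..s} - R \<and> odd (card R) \<noteq> odd (card R')"
proof (rule parity_switch_eq_cases[OF R R'])
  obtain u where u: "u \<in> Y2" using assms(1) by blast
  fix m assume m: "m \<in> {1..s}"
  show "(m \<in> R \<longleftrightarrow> odd (card R)) \<longleftrightarrow> (m \<in> R' \<longleftrightarrow> odd (card R'))"
    using side_finprod_tau[OF u m R] side_finprod_tau[OF u m R'] eq by auto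
qed

lemma inj_on_finprod_tau:
  assumes "Y2 \<noteq> {}" shows "inj_on (finprod TG tau) (Pow {1..<s})"
proof (rule inj_onI)
  fix R R' assume R: "R \<in> Pow {1..<s}" and R': "R' \<in> Pow {1..<s}"
    and eq: "finprod TG tau R = finprod TG tau R'"
  have "s \<in> {1..s} - R" using R s_ge_1 by auto
  then have "R' \<noteq> {1..s} - R" using R' by auto
  moreover have "R \<subseteq> {1..s}" "R' \<subseteq> {1..s}" using R R' by auto
  ultimately show "R = R'" using finprod_tau_eq_cases[OF assms _ _ eq] by blast
qed

lemma inj_on_finprod_tau_even:
  assumes "Y2 \<noteq> {}" and "even s" shows "inj_on (finprod TG tau) (Pow {1..s})"
proof (rule inj_onI)
  fix R R' assume R: "R \<in> Pow {1..s}" and R': "R' \<in> Pow {1..s}"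
    and eq: "finprod TG tau R = finprod TG tau R'"
  have sub: "R \<subseteq> {1..s}" "R' \<subseteq> {1..s}" using R R' by auto
  from finprod_tau_eq_cases[OF assms(1) sub eq] show "R = R'"
  proof (elim disjE conjE)
    assume R'_eq: "R' = {1..s} - R" and parity: "odd (card R) \<noteq> odd (card R')"
    have "card R' = s - card R" using R'_eq sub(1) by (simp add: card_Diff_subset finite_subset)
    moreover have "card R \<le> s" using sub(1) card_mono[of "{1..s}" R] by simp
    ultimately have "card R + card R' = s" by simp
    then show ?thesis using parity \<open>even s\<close> by (metis even_add)
  qed
qed

lemma card_le_card_T_of_inj_on: "inj_on (finprod TG tau) P \<Longrightarrow> P \<subseteq> Pow {1..s} \<Longrightarrow> card P \<le> card T"
  using card_inj_on_le[OF _ _ finite_T] finprod_tau_in_T by blast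

lemma card_T_ge: "Y2 \<noteq> {} \<Longrightarrow> 2 ^ (s - 1) \<le> card T"
proof -
  have "Pow {1..<s} \<subseteq> Pow {1..s}" by auto
  then show "Y2 \<noteq> {} \<Longrightarrow> ?thesis"
    using card_le_card_T_of_inj_on[OF inj_on_finprod_tau] by (simp add: card_Pow)
qed

lemma card_T_ge_even: "Y2 \<noteq> {} \<Longrightarrow> even s \<Longrightarrow> 2 ^ s \<le> card T"
  using card_le_card_T_of_inj_on[OF inj_on_finprod_tau_even] by (simp add: card_Pow)

lemma finprod_tau_singleton: "k \<in> {1..s} \<Longrightarrow> finprod TG tau {k} = tau k"
proof -
  interpret TG: comm_group TG by (rule comm_group_TG)
  assume k: "k \<in> {1..s}"
  then have k_in: "tau k \<in> carrier TG" using tau_funcset_carrier_TG[of "{k}"] by auto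
  have "finprod TG tau {k} = tau k \<otimes>\<^bsub>TG\<^esub> finprod TG tau {}"
    using TG.finprod_insert[of "{}" k tau] k_in by simp
  also have "finprod TG tau {} = \<one>\<^bsub>TG\<^esub>" by (rule TG.finprod_empty)
  finally show ?thesis using TG.r_one[OF k_in] by simp
qed

lemma tau_last_eq_finprod:
  assumes Y2: "Y2 \<noteq> {}" and card: "card T \<le> 2 ^ (s - 1)"
  shows "tau s = finprod TG tau {1..<s}"
proof -
  have s: "s \<in> {1..s}" using s_ge_1 by simp
  have sub: "{1..<s} \<subseteq> {1..s}" by auto
  have img: "finprod TG tau ` Pow {1..<s} \<subseteq> T"
    using finprod_tau_in_T[OF subset_trans[OF _ sub]] by auto
  have "card (finprod TG tau ` Pow {1..<s}) = 2 ^ (s - 1)"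
    using card_image[OF inj_on_finprod_tau[OF Y2]] by (simp add: card_Pow)
  then have "finprod TG tau ` Pow {1..<s} = T" using card_seteq[OF finite_T img] card by simp
  moreover have "tau s \<in> T" using s by (intro generate.incl imageI)
  ultimately obtain R where R: "R \<subseteq> {1..<s}" and "tau s = finprod TG tau R" by auto
  then have eq: "finprod TG tau {s} = finprod TG tau R" using finprod_tau_singleton[OF s] by simp
  have "R \<subseteq> {1..s}" "{s} \<subseteq> {1..s}" using R s by auto
  from finprod_tau_eq_cases[OF Y2 this(2,1) eq] have "R = {1..s} - {s}" using R by auto
  also have "\<dots> = {1..<s}" by auto
  finally show ?thesis using eq finprod_tau_singleton[OF s] by simp
qed

lemma foldr_tau_eq_finprod:
  "distinct ks \<Longrightarrow> set ks \<subseteq> {1..s} \<Longrightarrow> u \<in> Y2 \<Longrightarrow>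
    foldr (\<circ>) (map tau ks) id u = finprod TG tau (set ks) u"
proof (induction ks)
  case Nil
  interpret TG: comm_group TG by (rule comm_group_TG)
  have "finprod TG tau {} = \<one>\<^bsub>G\<^esub>" using TG.finprod_empty by simp
  then show ?case using Nil.prems by (simp add: BijGroup_def)
next
  case (Cons k ks)
  then show ?case using finprod_tau_apply_insert[of "set ks" k u] by simp
qed

lemma card_T_le_exp2_group_rank: "card T \<le> 2 ^ group_rank TG"
  using comm_group.card_le_exp2_group_rank[OF comm_group_TG] finite_T T_square_one by simp

lemma group_rank_TG_ge: "s - 1 \<le> group_rank TG"
proof (cases "Y2 = {}")
  case True
  then show ?thesis using Y2_empty_iff by simp
next
  case False
  then have "(2::nat) ^ (s - 1) \<le> 2 ^ group_rank TG"
    using card_T_ge card_T_le_exp2_group_rank order_trans by blast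
  then show ?thesis by simp
qed

lemma tau_last_if_group_rank:
  assumes "group_rank TG = s - 1" and u: "u \<in> Y2"
  shows "tau s u = foldr (\<circ>) (map tau [1..<s]) id u"
proof -
  have "tau s = finprod TG tau {1..<s}"
    using tau_last_eq_finprod u card_T_le_exp2_group_rank assms(1) by auto
  moreover have "set [1..<s] \<subseteq> {1..s}" by auto
  ultimately show ?thesis using foldr_tau_eq_finprod[of "[1..<s]" u] u by simp
qed

lemma parameter_cases: "(t, s, sb) \<in> {(1, 1, 0), (1, 2, 2), (1, 3, 4), (1, 5, 8)}"
proof (cases "Y2 = {}")
  case True
  then show ?thesis using Y2_empty_iff t_eq_1 sb_eq by simp
next
  case False
  then obtain u where u: "u \<in> Y2" by blast
  have "2 \<le> s" using False Y2_empty_iff s_ge_1 by auto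
  moreover have "card T = 4 * (s - 1)" using card_T[OF u] card_Y2_eq by simp
  ultimately have "s = 2 \<or> s = 3 \<or> s = 5"
    using exp2_le_four_mul_cases card_T_ge[OF False] card_T_ge_even[OF False] by simp
  then show ?thesis using t_eq_1 sb_eq by auto
qed

end

theorem lemma2:
  fixes Y :: "'a set" and E :: "'a \<Rightarrow> 'a \<Rightarrow> bool" and t s sb :: nat
    and y :: 'a and a1 a2 :: "nat \<Rightarrow> 'a"
  assumes ext: "extensible Y E t s sb"
    and t1: "t = 1"
    and yY: "y \<in> Y"
    and lab: "induced_edges (nbhd1 Y E y) E = {{a1 i, a2 i} | i. i \<in> {1..s}}"
    and lab_inj: "inj_on (\<lambda>i. {a1 i, a2 i}) {1..s}"
  shows
    "let Y2 = nbhd2 Y E y;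
         tt = (\<lambda>i. tperm Y E y (a1 i) (a2 i));
         G = BijGroup Y2;
         T = generate G (tt ` {1..s});
         TG = G\<lparr>carrier := T\<rparr>;
         r = group_rank TG
     in comm_group TG
        \<and> (\<forall>g \<in> T. g \<otimes>\<^bsub>G\<^esub> g = \<one>\<^bsub>G\<^esub>)
        \<and> (\<forall>u \<in> Y2. \<forall>v \<in> Y2. \<exists>!g. g \<in> T \<and> g u = v)
        \<and> r \<ge> s - 1
        \<and> (r = s - 1 \<longrightarrow> (\<forall>u \<in> Y2. tt s u = foldr (\<circ>) (map tt [1..<s]) id u))
        \<and> (t, s, sb) \<in> {(1,1,0), (1,2,2), (1,3,4), (1,5,8)}"
proof -
  interpret extensible_t1 Y E t s sb y a1 a2
    using ext t1 yY lab lab_inj by unfold_locales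
  show ?thesis
    unfolding Let_def
    using comm_group_TG T_square_one T_regular group_rank_TG_ge tau_last_if_group_rank parameter_cases
    by simp
qed

end
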